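(* Consider an interface between two cells $i$ and $j$ in a two-point flux finite-volume discretization of incompressible, immiscible multiphase flow with phases $\ell \in \{1,\dots,n_p\}$. Let $T>0$ be the interface transmissibility, and for each phase $\ell$ let $\lambda_{\ell,i}\ge 0$ and $\lambda_{\ell,j}\ge 0$ be the (fixed) phase mobilities in cells $i$ and $j$, $g_\ell$ a fixed phase gravity potential difference across the interface, and $D_\ell>0$ a fixed normalization constant. Treat the phase pressure differences $\Delta p_1,\dots,\Delta p_{n_p}$ across the interface as variables, and set $\Delta\Phi_\ell = \Delta p_\ell - g_\ell$. For a scaling coefficient $\gamma_\ell\in\mathbb{R}$ define $$\beta_\ell = \frac12 + \frac{1}{\pi}\arctan\!\Big(\gamma_\ell\,\frac{\Delta\Phi_\ell}{D_\ell}\Big),\qquad \lambda_\ell^{WA} = \beta_\ell\,\lambda_{\ell,i} + (1-\beta_\ell)\,\lambda_{\ell,j},$$ and the total velocity $$u_t = T\sum_{m=1}^{n_p} \lambda_m^{WA}\,\Delta\Phi_m .$$ If $\gamma_\ell \ge 0$, then $\dfrac{\partial u_t}{\partial \Delta p_\ell} \ge 0$.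
   Context: This is the weighted-averaging (WA) treatment of flow mobilities in a total velocity formulation. In the paper, $D_\ell = |g_{ij,ref}| + |c_{\ell,ref}|$ where $g_{ij,ref}=\max_\ell(\rho_{\ell,s})\, g\,\Delta z_{ij}$ is a reference gravity potential difference (with surface phase densities $\rho_{\ell,s}$) and $c_{\ell,ref}=p_{\ell,cap}(0.8)-p_{\ell,cap}(0.2)$ a reference capillary pressure difference; both are constants, assumed here to have positive sum. Differences are taken as $\Delta\bullet = \bullet_i - \bullet_j$. The mobilities are held fixed (they depend on saturations, not on pressures). *)

theory Defs
  imports Complex_Main
begin

text \<open>Phases are indexed by 0..np-1. Phase pressure differences dp, gravity
potential differences g, normalisation constants D, scaling coefficients gam and
cell mobilities lam_i, lam_j are functions of the phase index.\<close>

definition wa_beta :: "real \<Rightarrow> real \<Rightarrow> real \<Rightarrow> real" where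
  "wa_beta gam D dPhi = 1/2 + arctan (gam * dPhi / D) / pi"

definition wa_mob :: "real \<Rightarrow> real \<Rightarrow> real \<Rightarrow> real \<Rightarrow> real \<Rightarrow> real" where
  "wa_mob lami lamj gam D dPhi =
     wa_beta gam D dPhi * lami + (1 - wa_beta gam D dPhi) * lamj"

definition total_velocity ::
  "nat \<Rightarrow> real \<Rightarrow> (nat \<Rightarrow> real) \<Rightarrow> (nat \<Rightarrow> real) \<Rightarrow> (nat \<Rightarrow> real)
    \<Rightarrow> (nat \<Rightarrow> real) \<Rightarrow> (nat \<Rightarrow> real) \<Rightarrow> (nat \<Rightarrow> real) \<Rightarrow> real" where
  "total_velocity np T lami lamj g D gam dp =
     T * (\<Sum>m<np. wa_mob (lami m) (lamj m) (gam m) (D m) (dp m - g m) * (dp m - g m))"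

end

theory Submission
  imports Defs
begin

text \<open>With \<open>s = \<Delta>p\<^sub>\<ell> - g\<^sub>\<ell>\<close> and \<open>a = \<gamma>\<^sub>\<ell> s / D\<^sub>\<ell>\<close>, only the \<open>\<ell>\<close>-th summand of \<open>u\<^sub>t\<close>
  depends on \<open>\<Delta>p\<^sub>\<ell>\<close>, and it equals \<open>(\<lambda>\<^sub>j + (\<lambda>\<^sub>i - \<lambda>\<^sub>j) \<beta>(s)) s\<close>. Its derivative is the
  convex combination \<open>(1 - w) \<lambda>\<^sub>j + w \<lambda>\<^sub>i\<close> with \<open>w = 1/2 + (\<theta> + sin \<theta> cos \<theta>) / \<pi>\<close>,
  \<open>\<theta> = arctan a\<close>. Since \<open>\<bar>\<theta>\<bar> < \<pi>/2\<close>, the inequality \<open>sin x \<le> x\<close> at \<open>x = \<pi> - 2\<theta>\<close>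
  gives \<open>\<bar>\<theta> + sin \<theta> cos \<theta>\<bar> \<le> \<pi>/2\<close>, i.e. \<open>0 \<le> w \<le> 1\<close>. This holds for every sign
  of \<open>\<gamma>\<^sub>\<ell>\<close>.\<close>

definition wa_flux_weight :: "real \<Rightarrow> real" where
  "wa_flux_weight a = 1/2 + (arctan a + a / (1 + a\<^sup>2)) / pi"

lemma sin_cos_arctan: "sin (arctan a) * cos (arctan a) = a / (1 + a\<^sup>2)"
proof -
  have "sqrt (1 + a\<^sup>2) * sqrt (1 + a\<^sup>2) = 1 + a\<^sup>2"
    by (simp add: add_nonneg_nonneg)
  then show ?thesis
    by (simp add: sin_arctan cos_arctan)
qed

lemma arctan_plus_le_pi_half: "arctan a + a / (1 + a\<^sup>2) \<le> pi / 2"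
proof -
  define \<theta> where "\<theta> = arctan a"
  have "a / (1 + a\<^sup>2) = sin (2 * \<theta>) / 2"
    by (simp add: \<theta>_def sin_double sin_cos_arctan)
  also have "\<dots> = sin (pi - 2 * \<theta>) / 2"
    by simp
  also have "\<dots> \<le> (pi - 2 * \<theta>) / 2"
    using sin_x_le_x[of "pi - 2 * \<theta>"] arctan_ubound[of a] by (simp add: \<theta>_def)
  finally show ?thesis
    by (simp add: \<theta>_def)
qed

lemma abs_arctan_plus_le_pi_half: "\<bar>arctan a + a / (1 + a\<^sup>2)\<bar> \<le> pi / 2"
proof -
  have "- (arctan a + a / (1 + a\<^sup>2)) \<le> pi / 2"
    using arctan_plus_le_pi_half[of "- a"] by (simp add: arctan_minus)
  then show ?thesis
    using arctan_plus_le_pi_half[of a] unfolding abs_le_iff by linarith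
qed

lemma wa_flux_weight_bounds: "0 \<le> wa_flux_weight a" "wa_flux_weight a \<le> 1"
proof -
  define k where "k = arctan a + a / (1 + a\<^sup>2)"
  have "\<bar>k\<bar> \<le> pi / 2"
    using abs_arctan_plus_le_pi_half[of a] by (simp add: k_def)
  then have "\<bar>k / pi\<bar> \<le> 1 / 2"
    by (simp add: abs_divide divide_le_eq)
  then show "0 \<le> wa_flux_weight a" "wa_flux_weight a \<le> 1"
    unfolding wa_flux_weight_def k_def[symmetric] abs_le_iff by linarith+
qed

lemma wa_beta_times_has_real_derivative:
  assumes "D \<noteq> 0"
  shows "((\<lambda>s. wa_beta gam D s * s) has_real_derivative wa_flux_weight (gam * s / D)) (at s)"
  unfolding wa_beta_def wa_flux_weight_def
  using assms by (auto intro!: derivative_eq_intros simp: field_simps)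

lemma wa_flux_has_real_derivative:
  assumes "D \<noteq> 0"
  shows "((\<lambda>s. wa_mob li lj gam D s * s) has_real_derivative
           (1 - wa_flux_weight (gam * s / D)) * lj + wa_flux_weight (gam * s / D) * li) (at s)"
proof -
  have flux_eq: "(\<lambda>s. wa_mob li lj gam D s * s) = (\<lambda>s. lj * s + (li - lj) * (wa_beta gam D s * s))"
    by (simp add: fun_eq_iff wa_mob_def algebra_simps)
  have weight_eq: "(1 - w) * lj + w * li = lj * 1 + (li - lj) * w" for w :: real
    by (simp add: algebra_simps)
  show ?thesis
    unfolding flux_eq weight_eq
    using assms by (intro DERIV_add DERIV_cmult DERIV_ident wa_beta_times_has_real_derivative)
qed

lemma has_real_derivative_sum_update:
  assumes "finite A" "l \<in> A" "(f l has_real_derivative d) (at (p l))"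
  shows "((\<lambda>x. \<Sum>m\<in>A. f m ((p(l := x)) m)) has_real_derivative d) (at (p l))"
proof -
  have "((\<lambda>x. \<Sum>m\<in>A. f m ((p(l := x)) m)) has_real_derivative
          (\<Sum>m\<in>A. if m = l then d else 0)) (at (p l))"
    using assms(3) by (intro DERIV_sum) auto
  then show ?thesis
    using assms(1,2) by simp
qed

theorem mainTheorem1:
  fixes np :: nat and T :: real and l :: nat
    and lami lamj g D gam dp :: "nat \<Rightarrow> real"
  assumes "l < np"
    and "T > 0"
    and "\<And>m. m < np \<Longrightarrow> lami m \<ge> 0"
    and "\<And>m. m < np \<Longrightarrow> lamj m \<ge> 0"
    and "\<And>m. m < np \<Longrightarrow> D m > 0"
    and "gam l \<ge> 0"
  shows "\<exists>d. ((\<lambda>x. total_velocity np T lami lamj g D gam (dp(l := x)))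
              has_real_derivative d) (at (dp l)) \<and> d \<ge> 0"
proof -
  define w where "w = wa_flux_weight (gam l * (dp l - g l) / D l)"
  have "((\<lambda>s. wa_mob (lami l) (lamj l) (gam l) (D l) s * s) has_real_derivative
      (1 - w) * lamj l + w * lami l) (at (dp l - g l))"
    unfolding w_def using assms(5)[OF assms(1)] by (intro wa_flux_has_real_derivative) simp
  then have "((\<lambda>x. wa_mob (lami l) (lamj l) (gam l) (D l) (x - g l) * (x - g l)) has_real_derivative
      ((1 - w) * lamj l + w * lami l) * 1) (at (dp l))"
    by (rule DERIV_chain2[where g = "\<lambda>x. x - g l"]) (auto intro!: derivative_eq_intros)
  then have "((\<lambda>x. total_velocity np T lami lamj g D gam (dp(l := x))) has_real_derivative
      T * ((1 - w) * lamj l + w * lami l)) (at (dp l))"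
    unfolding total_velocity_def using assms(1)
    by (intro DERIV_cmult has_real_derivative_sum_update) auto
  moreover have "0 \<le> T * ((1 - w) * lamj l + w * lami l)"
    using wa_flux_weight_bounds assms(1-4) by (simp add: w_def)
  ultimately show ?thesis
    by blast
qed

end
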